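(* $[N,L_G]=-i\mathbf 1$ on $\mathrm D(NL_G)\cap\mathrm D(L_GN)$.
   Context: $\ell^2=\ell^2(\mathbb N)$, $\mathbb N=\{0,1,\dots\}$, basis $(\xi_n)$; $N\xi_n=n\xi_n$ (self-adjoint, maximal domain); $L$ left shift ($L\xi_n=\xi_{n-1}$, $L\xi_0=0$), $L^*$ right shift. $L_G$ is defined by $\mathrm D(L_G)=\{\varphi\in\ell^2:\lim_{K\to\infty}\sum_{k=1}^K\frac1k(L^{*k}-L^k)\varphi\text{ exists}\}$, $L_G\varphi=i\sum_{k=1}^\infty\frac1k(L^{*k}-L^k)\varphi$. Products of operators have their natural domains, and "$[A,B]=C$ on $\mathcal D$" means $(AB-BA)\varphi=C\varphi$ for $\varphi\in\mathcal D\subset\mathrm D(AB)\cap\mathrm D(BA)$. *)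

theory Defs
  imports "HOL-Analysis.Analysis"
begin

text \<open>Elements of l2(N) are represented as functions nat => complex that are
square-summable; operators are given by a domain set and an action.\<close>

definition l2 :: "(nat \<Rightarrow> complex) set" where
  "l2 = {f. summable (\<lambda>n. (cmod (f n))\<^sup>2)}"

definition l2norm :: "(nat \<Rightarrow> complex) \<Rightarrow> real" where
  "l2norm f = sqrt (\<Sum>n. (cmod (f n))\<^sup>2)"

definition domN :: "(nat \<Rightarrow> complex) set" where
  "domN = {f \<in> l2. (\<lambda>n. of_nat n * f n) \<in> l2}"

definition opN :: "(nat \<Rightarrow> complex) \<Rightarrow> (nat \<Rightarrow> complex)" where
  "opN f = (\<lambda>n. of_nat n * f n)"

text \<open>Left shift L (L xi_n = xi_{n-1}, L xi_0 = 0) and right shift L^*.\<close>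
definition shiftL :: "(nat \<Rightarrow> complex) \<Rightarrow> (nat \<Rightarrow> complex)" where
  "shiftL f = (\<lambda>n. f (Suc n))"

definition shiftR :: "(nat \<Rightarrow> complex) \<Rightarrow> (nat \<Rightarrow> complex)" where
  "shiftR f = (\<lambda>n. if n = 0 then 0 else f (n - 1))"

definition LG_partial :: "nat \<Rightarrow> (nat \<Rightarrow> complex) \<Rightarrow> (nat \<Rightarrow> complex)" where
  "LG_partial K f = (\<lambda>n. \<Sum>k=1..K. (1 / of_nat k) * ((shiftR ^^ k) f n - (shiftL ^^ k) f n))"

definition domLG :: "(nat \<Rightarrow> complex) set" where
  "domLG = {f \<in> l2. \<exists>g \<in> l2. (\<lambda>K. l2norm (LG_partial K f - g)) \<longlonglongrightarrow> 0}"

definition opLG :: "(nat \<Rightarrow> complex) \<Rightarrow> (nat \<Rightarrow> complex)" where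
  "opLG f = (\<lambda>n. \<i> * (THE g. g \<in> l2 \<and> (\<lambda>K. l2norm (LG_partial K f - g)) \<longlonglongrightarrow> 0) n)"

end

theory Submission
  imports Defs
begin

text \<open>Write \<open>L\<^sub>G \<phi> = \<i> g\<close> and \<open>L\<^sub>G (N \<phi>) = \<i> g'\<close>. Convergence in \<open>\<ell>\<^sup>2\<close> gives coordinatewise
  convergence, and the \<open>n\<close>-th coordinate of the \<open>K\<close>-th partial sum splits into a finite backward
  sum over \<open>k \<le> n\<close> and a forward tail over \<open>n < m \<le> n + K\<close>. Comparing the coordinates for
  \<open>\<phi>\<close> and \<open>N \<phi>\<close>, the weights \<open>1/k\<close> cancel against the factors \<open>n \<plusminus> k\<close>, and what remains is
  \<open>n g\<^sub>n - g'\<^sub>n + \<phi>\<^sub>n = \<Sum>\<^sub>m \<phi>\<^sub>m\<close> for every \<open>n\<close>. The left-hand side lies in \<open>\<ell>\<^sup>2\<close> and the right-hand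
  side does not depend on \<open>n\<close>, so both vanish, which is \<open>[N, L\<^sub>G] \<phi> = -\<i> \<phi>\<close>.\<close>

lemma l2_add:
  assumes "f \<in> l2" "g \<in> l2" shows "(\<lambda>n. f n + g n) \<in> l2"
proof -
  have "summable (\<lambda>n. 2 * (cmod (f n))\<^sup>2 + 2 * (cmod (g n))\<^sup>2)"
    using assms unfolding l2_def by (intro summable_add summable_mult) auto
  moreover have "norm ((cmod (f n + g n))\<^sup>2) \<le> 2 * (cmod (f n))\<^sup>2 + 2 * (cmod (g n))\<^sup>2" for n
  proof -
    have "(cmod (f n + g n))\<^sup>2 \<le> (cmod (f n) + cmod (g n))\<^sup>2"
      by (intro power_mono norm_triangle_ineq) auto
    also have "\<dots> \<le> 2 * (cmod (f n))\<^sup>2 + 2 * (cmod (g n))\<^sup>2"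
      using zero_le_power2[of "cmod (f n) - cmod (g n)"] by (simp add: power2_sum power2_diff)
    finally show ?thesis by simp
  qed
  ultimately show ?thesis unfolding l2_def mem_Collect_eq
    by (rule summable_comparison_test'[where N=0])
qed

lemma l2_scale:
  assumes "f \<in> l2" shows "(\<lambda>n. c * f n) \<in> l2"
proof -
  have "summable (\<lambda>n. (cmod c)\<^sup>2 * (cmod (f n))\<^sup>2)"
    using assms unfolding l2_def by (intro summable_mult) auto
  thus ?thesis unfolding l2_def by (simp add: norm_mult power_mult_distrib)
qed

lemma l2_diff: "f \<in> l2 \<Longrightarrow> g \<in> l2 \<Longrightarrow> f - g \<in> l2"
  using l2_add[of f "\<lambda>n. - 1 * g n"] l2_scale[of g "- 1"] by (simp add: fun_diff_def)

lemma l2_sum: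
  "finite A \<Longrightarrow> (\<And>k. k \<in> A \<Longrightarrow> F k \<in> l2) \<Longrightarrow> (\<lambda>n. \<Sum>k\<in>A. F k n) \<in> l2"
proof (induction A rule: finite_induct)
  case empty
  then show ?case by (simp add: l2_def)
next
  case (insert x A)
  then show ?case using l2_add[of "F x" "\<lambda>n. \<Sum>k\<in>A. F k n"] by simp
qed

lemma l2_shiftL: "f \<in> l2 \<Longrightarrow> shiftL f \<in> l2"
  unfolding l2_def shiftL_def using summable_Suc_iff[of "\<lambda>n. (cmod (f n))\<^sup>2"] by simp

lemma l2_shiftR: "f \<in> l2 \<Longrightarrow> shiftR f \<in> l2"
  unfolding l2_def using summable_Suc_iff[of "\<lambda>n. (cmod (shiftR f n))\<^sup>2"]
  by (simp add: shiftR_def)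

lemma l2_LG_partial: "f \<in> l2 \<Longrightarrow> LG_partial K f \<in> l2"
proof -
  assume f: "f \<in> l2"
  have "(shiftR ^^ k) f \<in> l2" "(shiftL ^^ k) f \<in> l2" for k
    by (induction k) (simp_all add: f l2_shiftR l2_shiftL)
  then show ?thesis
    unfolding LG_partial_def
    by (intro l2_sum l2_scale) (simp_all add: l2_diff[unfolded fun_diff_def])
qed

lemma l2_constant_eq_0:
  assumes "f \<in> l2" "\<And>n. f n = c" shows "c = 0"
proof -
  have "summable (\<lambda>n::nat. (cmod c)\<^sup>2)" using assms by (simp add: l2_def)
  then have "(\<lambda>n::nat. (cmod c)\<^sup>2) \<longlonglongrightarrow> 0" by (rule summable_LIMSEQ_zero)
  then show ?thesis unfolding LIMSEQ_const_iff by simp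
qed

lemma norm_le_l2norm:
  assumes "h \<in> l2" shows "cmod (h n) \<le> l2norm h"
proof -
  have "(\<Sum>i\<in>{n}. (cmod (h i))\<^sup>2) \<le> (\<Sum>i. (cmod (h i))\<^sup>2)"
    using assms unfolding l2_def by (intro sum_le_suminf) auto
  then have "sqrt ((cmod (h n))\<^sup>2) \<le> l2norm h"
    unfolding l2norm_def by (intro real_sqrt_le_mono) simp
  then show ?thesis by simp
qed

lemma l2_tendsto_imp_coordinate_tendsto:
  assumes "\<And>K. F K \<in> l2" "g \<in> l2" "(\<lambda>K. l2norm (F K - g)) \<longlonglongrightarrow> 0"
  shows "(\<lambda>K. F K n) \<longlonglongrightarrow> g n"
proof -
  have "(\<lambda>K. F K n - g n) \<longlonglongrightarrow> 0"
  proof (rule Lim_null_comparison[OF _ assms(3)])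
    show "\<forall>\<^sub>F K in sequentially. norm (F K n - g n) \<le> l2norm (F K - g)"
      using norm_le_l2norm[OF l2_diff[OF assms(1,2)], of _ n] by (simp add: always_eventually)
  qed
  then show ?thesis by (rule LIM_zero_cancel)
qed

lemma opLG_eq:
  assumes "f \<in> l2" "g \<in> l2" "(\<lambda>K. l2norm (LG_partial K f - g)) \<longlonglongrightarrow> 0"
  shows "opLG f = (\<lambda>n. \<i> * g n)"
proof -
  have "(THE g. g \<in> l2 \<and> (\<lambda>K. l2norm (LG_partial K f - g)) \<longlonglongrightarrow> 0) = g"
  proof (rule the_equality)
    fix g' assume g': "g' \<in> l2 \<and> (\<lambda>K. l2norm (LG_partial K f - g')) \<longlonglongrightarrow> 0"
    show "g' = g"
    proof
      fix n
      have "(\<lambda>K. LG_partial K f n) \<longlonglongrightarrow> g' n" "(\<lambda>K. LG_partial K f n) \<longlonglongrightarrow> g n"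
        using assms g' by (auto intro: l2_tendsto_imp_coordinate_tendsto l2_LG_partial)
      then show "g' n = g n" by (rule LIMSEQ_unique)
    qed
  qed (use assms in auto)
  then show ?thesis unfolding opLG_def by simp
qed

lemma funpow_shiftL: "(shiftL ^^ k) f = (\<lambda>n. f (n + k))"
  by (induction k) (auto simp: shiftL_def)

lemma funpow_shiftR: "(shiftR ^^ k) f = (\<lambda>n. if k \<le> n then f (n - k) else 0)"
  by (induction k) (auto simp: shiftR_def fun_eq_iff)

definition LG_backward :: "(nat \<Rightarrow> complex) \<Rightarrow> nat \<Rightarrow> complex" where
  "LG_backward f n = (\<Sum>k=1..n. (1 / of_nat k) * f (n - k))"

definition LG_forward :: "(nat \<Rightarrow> complex) \<Rightarrow> nat \<Rightarrow> nat \<Rightarrow> complex" where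
  "LG_forward f n K = (\<Sum>k=1..K. (1 / of_nat k) * f (n + k))"

lemma LG_partial_split:
  assumes "n \<le> K" shows "LG_partial K f n = LG_backward f n - LG_forward f n K"
proof -
  have "(\<Sum>k=1..K. (1 / of_nat k) * (if k \<le> n then f (n - k) else 0))
      = (\<Sum>k=1..n. (1 / of_nat k) * (if k \<le> n then f (n - k) else 0))"
    using assms by (intro sum.mono_neutral_right) auto
  also have "\<dots> = LG_backward f n" unfolding LG_backward_def by (intro sum.cong) auto
  finally show ?thesis
    unfolding LG_partial_def funpow_shiftL funpow_shiftR LG_forward_def
    by (simp add: sum_subtractf right_diff_distrib)
qed

lemma LG_forward_tendsto:
  assumes "f \<in> l2" "g \<in> l2" "(\<lambda>K. l2norm (LG_partial K f - g)) \<longlonglongrightarrow> 0"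
  shows "LG_forward f n \<longlonglongrightarrow> LG_backward f n - g n"
proof -
  have "(\<lambda>K. LG_partial K f n) \<longlonglongrightarrow> g n"
    using assms by (intro l2_tendsto_imp_coordinate_tendsto l2_LG_partial)
  then have "(\<lambda>K. LG_backward f n - LG_partial K f n) \<longlonglongrightarrow> LG_backward f n - g n"
    by (intro tendsto_intros)
  moreover have "\<forall>\<^sub>F K in sequentially. LG_backward f n - LG_partial K f n = LG_forward f n K"
    unfolding eventually_sequentially by (intro exI[of _ n]) (auto simp: LG_partial_split)
  ultimately show ?thesis by (rule Lim_transform_eventually)
qed

lemma LG_backward_commutator:
  "of_nat n * LG_backward \<phi> n - LG_backward (opN \<phi>) n = (\<Sum>m<n. \<phi> m)"
proof -
  have "of_nat n * LG_backward \<phi> n - LG_backward (opN \<phi>) n = (\<Sum>k=1..n. \<phi> (n - k))"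
    unfolding LG_backward_def opN_def sum_distrib_left sum_subtractf[symmetric]
    by (intro sum.cong) (auto simp: of_nat_diff field_simps)
  also have "\<dots> = (\<Sum>i<n. \<phi> (n - Suc i))"
    using sum.atLeast1_atMost_eq[of "\<lambda>k. \<phi> (n - k)" n] by simp
  also have "\<dots> = (\<Sum>m<n. \<phi> m)" by (rule sum.nat_diff_reindex)
  finally show ?thesis .
qed

lemma LG_forward_commutator:
  "LG_forward (opN \<phi>) n K - of_nat n * LG_forward \<phi> n K = (\<Sum>k=1..K. \<phi> (n + k))"
  unfolding LG_forward_def opN_def sum_distrib_left sum_subtractf[symmetric]
  by (intro sum.cong) (auto simp: field_simps)

lemma sum_lessThan_split_at:
  "(\<Sum>m<K + Suc n. \<phi> m) = (\<Sum>m<Suc n. \<phi> m) + (\<Sum>k=1..K. \<phi> (n + k))"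
  by (induction K) (auto simp: add.commute add.left_commute)

lemma LG_commutator_coordinate:
  assumes "\<phi> \<in> l2" "opN \<phi> \<in> l2"
    and g: "g \<in> l2" "(\<lambda>K. l2norm (LG_partial K \<phi> - g)) \<longlonglongrightarrow> 0"
    and g': "g' \<in> l2" "(\<lambda>K. l2norm (LG_partial K (opN \<phi>) - g')) \<longlonglongrightarrow> 0"
  shows "(\<lambda>N. \<Sum>m<N. \<phi> m) \<longlonglongrightarrow> of_nat n * g n - g' n + \<phi> n"
proof -
  have "(\<lambda>K. (\<Sum>m<Suc n. \<phi> m) + (LG_forward (opN \<phi>) n K - of_nat n * LG_forward \<phi> n K))
     \<longlonglongrightarrow> (\<Sum>m<Suc n. \<phi> m) + ((LG_backward (opN \<phi>) n - g' n) - of_nat n * (LG_backward \<phi> n - g n))"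
    using assms by (intro tendsto_intros LG_forward_tendsto)
  also have "(\<Sum>m<Suc n. \<phi> m) + ((LG_backward (opN \<phi>) n - g' n) - of_nat n * (LG_backward \<phi> n - g n))
      = of_nat n * g n - g' n + \<phi> n"
    using LG_backward_commutator[of n \<phi>] by (simp add: algebra_simps)
  finally have "(\<lambda>K. \<Sum>m<K + Suc n. \<phi> m) \<longlonglongrightarrow> of_nat n * g n - g' n + \<phi> n"
    by (simp only: LG_forward_commutator sum_lessThan_split_at)
  then show ?thesis by (rule LIMSEQ_offset)
qed

theorem mainTheorem10:
  fixes \<phi> :: "nat \<Rightarrow> complex"
  assumes "\<phi> \<in> domLG" and "opLG \<phi> \<in> domN"
      and "\<phi> \<in> domN" and "opN \<phi> \<in> domLG"
  shows "opN (opLG \<phi>) - opLG (opN \<phi>) = (\<lambda>n. - \<i> * \<phi> n)"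
proof -
  obtain g where g: "g \<in> l2" "(\<lambda>K. l2norm (LG_partial K \<phi> - g)) \<longlonglongrightarrow> 0"
    using assms(1) unfolding domLG_def by auto
  obtain g' where g': "g' \<in> l2" "(\<lambda>K. l2norm (LG_partial K (opN \<phi>) - g')) \<longlonglongrightarrow> 0"
    using assms(4) unfolding domLG_def by auto
  have \<phi>: "\<phi> \<in> l2" "opN \<phi> \<in> l2" using assms(1,4) unfolding domLG_def by auto
  note LG = opLG_eq[OF \<phi>(1) g] opLG_eq[OF \<phi>(2) g']
  define B where "B n = of_nat n * g n - g' n + \<phi> n" for n
  have "(\<lambda>n. of_nat n * (\<i> * g n)) \<in> l2" using assms(2) unfolding domN_def LG by simp
  then have "(\<lambda>n. - \<i> * (of_nat n * (\<i> * g n))) \<in> l2" by (rule l2_scale)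
  then have "(\<lambda>n. of_nat n * g n) \<in> l2" by (simp add: algebra_simps)
  from l2_add[OF l2_diff[OF this g'(1)] \<phi>(1)] have "B \<in> l2"
    unfolding B_def fun_diff_def .
  have B_const: "B n = B 0" for n
    using LIMSEQ_unique[OF LG_commutator_coordinate[OF \<phi> g g', of n]
        LG_commutator_coordinate[OF \<phi> g g', of 0]]
    unfolding B_def .
  from \<open>B \<in> l2\<close> B_const have "B 0 = 0" by (rule l2_constant_eq_0)
  with B_const have B_eq_0: "B n = 0" for n by simp
  have "g' n = of_nat n * g n + \<phi> n - B n" for n by (simp add: B_def)
  then have g'_eq: "g' n = of_nat n * g n + \<phi> n" for n by (simp add: B_eq_0)
  show ?thesis
  proof
    fix n
    show "(opN (opLG \<phi>) - opLG (opN \<phi>)) n = - \<i> * \<phi> n"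
      using g'_eq[of n] unfolding LG by (simp add: opN_def algebra_simps)
  qed
qed

end
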